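(* If $w\in\Sigma^*$ is square-free, then every scattered factor $u$ of $w$ with $|E(w,u)|\ge2$ satisfies $|C(w,u)|>1$.
   Context: A word $w$ is square-free if it has no factor of the form $yy$ with $y$ a nonempty word. An embedding of $u$ in $w$ is a map $e:\{1,\dots,|u|\}\to\{1,\dots,|w|\}$ with $e(1)<\dots<e(|u|)$ and $u[i]=w[e(i)]$; $E(w,u)$ is the set of embeddings of $u$ in $w$. The shuffle $\mathrm{Sh}(u,v)$ is the set of words of length $|u|+|v|$ admitting an embedding of $u$ and one of $v$ with disjoint images covering all positions, and $C(w,u)=\{v\in\Sigma^{|w|-|u|}: w\in\mathrm{Sh}(u,v)\}$. *)

theory Defs
  imports Main
begin

(* Words are lists over an alphabet type 'a; positions are 0-based.
   An embedding of u in w is represented as the list [e(1),...,e(|u|)] of positions. *)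

definition square_free :: "'a list \<Rightarrow> bool" where
  "square_free w \<longleftrightarrow> \<not> (\<exists>x y z. y \<noteq> [] \<and> w = x @ y @ y @ z)"

definition is_embedding :: "'a list \<Rightarrow> 'a list \<Rightarrow> nat list \<Rightarrow> bool" where
  "is_embedding w u e \<longleftrightarrow> length e = length u \<and> sorted_wrt (<) e
     \<and> (\<forall>i < length u. e ! i < length w \<and> u ! i = w ! (e ! i))"

definition Emb :: "'a list \<Rightarrow> 'a list \<Rightarrow> nat list set" where
  "Emb w u = {e. is_embedding w u e}"

definition scattered_factor :: "'a list \<Rightarrow> 'a list \<Rightarrow> bool" where
  "scattered_factor u w \<longleftrightarrow> Emb w u \<noteq> {}"

definition in_shuffle :: "'a list \<Rightarrow> 'a list \<Rightarrow> 'a list \<Rightarrow> bool" where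
  "in_shuffle w u v \<longleftrightarrow> length w = length u + length v \<and>
     (\<exists>e f. is_embedding w u e \<and> is_embedding w v f \<and> set e \<inter> set f = {}
            \<and> set e \<union> set f = {0..<length w})"

definition Compl :: "'a list \<Rightarrow> 'a list \<Rightarrow> 'a list set" where
  "Compl w u = {v. length v = length w - length u \<and> in_shuffle w u v}"

end

theory Submission
  imports Defs
begin

(* Let e and f be distinct embeddings of u in w that first differ at index i, say
   a = e(i) < f(i). Moving the i-th position of f down to a gives another embedding g.
   Outside g and outside f the same positions lie below a, so the complementary words
   of f and g carry, at one and the same index, the letters w[a] and w[a+1].
   These differ because a square-free word has no two equal adjacent letters. *)

lemma nths_eq_map_nth_filter_upt:
  "nths xs I = map ((!) xs) (filter (\<lambda>i. i \<in> I) [0..<length xs])"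
proof (induction xs rule: rev_induct)
  case (snoc x xs)
  have "map ((!) (xs @ [x])) (filter (\<lambda>i. i \<in> I) [0..<length xs])
      = map ((!) xs) (filter (\<lambda>i. i \<in> I) [0..<length xs])"
    by (intro map_cong) (auto simp: nth_append)
  then show ?case using snoc by (simp add: nths_append)
qed simp

lemma nth_nths_card:
  assumes "k \<in> I" "k < length xs"
  shows "nths xs I ! card {j \<in> I. j < k} = xs ! k"
proof -
  have "xs = take k xs @ xs ! k # drop (Suc k) xs"
    using assms(2) by (simp add: id_take_nth_drop)
  then have "nths xs I = nths (take k xs) I @ nths (xs ! k # drop (Suc k) xs) {j. j + k \<in> I}"
    using assms(2) by (metis nths_append length_take min_absorb2 less_imp_le)
  also have "\<dots> = nths (take k xs) I @ xs ! k # nths (drop (Suc k) xs) {j. Suc j + k \<in> I}"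
    using assms(1) by (simp add: nths_Cons)
  finally have "nths xs I = \<dots>" .
  moreover have "length (nths (take k xs) I) = card {j \<in> I. j < k}"
    using assms(2) by (simp add: length_nths conj_commute)
  ultimately show ?thesis by (simp add: nth_append)
qed

lemma nths_compl_neq:
  assumes "a \<notin> S" "a \<in> T" "Suc a \<notin> T" and below: "\<And>j. j < a \<Longrightarrow> j \<in> S \<longleftrightarrow> j \<in> T"
    and "Suc a < length xs" "xs ! a \<noteq> xs ! Suc a"
  shows "nths xs (- S) \<noteq> nths xs (- T)"
proof -
  have "{j \<in> - S. j < a} = {j \<in> - T. j < Suc a}"
    using below \<open>a \<in> T\<close> by (auto simp: less_Suc_eq)
  then have "nths xs (- S) ! card {j \<in> - S. j < a} = xs ! a"
    and "nths xs (- T) ! card {j \<in> - S. j < a} = xs ! Suc a"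
    using assms nth_nths_card[of a "- S" xs] nth_nths_card[of "Suc a" "- T" xs] by auto
  then show ?thesis using \<open>xs ! a \<noteq> xs ! Suc a\<close> by metis
qed

lemma first_difference:
  assumes "length xs = length ys" "xs \<noteq> ys"
  obtains i where "i < length xs" "xs ! i \<noteq> ys ! i" "\<And>j. j < i \<Longrightarrow> xs ! j = ys ! j"
proof -
  have "\<exists>i. i < length xs \<and> xs ! i \<noteq> ys ! i"
    using assms nth_equalityI by blast
  then obtain i where "i < length xs \<and> xs ! i \<noteq> ys ! i"
    and "\<And>j. j < i \<Longrightarrow> \<not> (j < length xs \<and> xs ! j \<noteq> ys ! j)"
    using exists_least_iff[of "\<lambda>i. i < length xs \<and> xs ! i \<noteq> ys ! i"] by blast
  then show ?thesis using that by force
qed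

lemma square_free_nth_neq_nth_Suc:
  assumes "square_free w" "Suc a < length w"
  shows "w ! a \<noteq> w ! Suc a"
proof
  assume "w ! a = w ! Suc a"
  moreover have "drop a w = w ! a # w ! Suc a # drop (Suc (Suc a)) w"
    using assms(2) by (simp add: Cons_nth_drop_Suc)
  ultimately have "w = take a w @ [w ! a] @ [w ! a] @ drop (Suc (Suc a)) w"
    by (metis append_Cons append_Nil append_take_drop_id)
  then show False using assms(1) unfolding square_free_def by blast
qed

lemma is_embedding_filter_upt:
  "is_embedding w (map ((!) w) (filter P [0..<length w])) (filter P [0..<length w])"
  unfolding is_embedding_def
  by (auto intro: sorted_wrt_filter dest: nth_mem)

lemma is_embedding_set_subset:
  "is_embedding w u e \<Longrightarrow> set e \<subseteq> {0..<length w}"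
  unfolding is_embedding_def by (auto simp: in_set_conv_nth)

lemma is_embedding_distinct:
  "is_embedding w u e \<Longrightarrow> distinct e"
  unfolding is_embedding_def by (simp add: strict_sorted_iff)

lemma is_embedding_length_le:
  assumes "is_embedding w u e"
  shows "length u \<le> length w"
proof -
  have "length u = card (set e)"
    using assms is_embedding_distinct distinct_card unfolding is_embedding_def by metis
  also have "\<dots> \<le> length w"
    using card_mono[OF _ is_embedding_set_subset[OF assms]] by simp
  finally show ?thesis .
qed

lemma is_embedding_set_subset_set:
  "is_embedding w u e \<Longrightarrow> set u \<subseteq> set w"
  unfolding is_embedding_def by (metis in_set_conv_nth nth_mem subsetI)

lemma is_embedding_update:
  assumes f: "is_embedding w u f" and "i < length u" "a < length w" "w ! a = u ! i"
    and "\<And>k. k < i \<Longrightarrow> f ! k < a" "\<And>k. i < k \<Longrightarrow> k < length u \<Longrightarrow> a < f ! k"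
  shows "is_embedding w u (f[i := a])"
  using assms unfolding is_embedding_def sorted_wrt_iff_nth_less
  by (auto simp: nth_list_update)

lemma nths_compl_in_Compl:
  assumes e: "is_embedding w u e"
  shows "nths w (- set e) \<in> Compl w u"
proof -
  let ?c = "filter (\<lambda>i. i \<in> - set e) [0..<length w]"
  let ?v = "nths w (- set e)"
  have c: "is_embedding w ?v ?c"
    using is_embedding_filter_upt by (simp add: nths_eq_map_nth_filter_upt)
  have "set ?c = {0..<length w} - set e" by auto
  then have "length ?v = card ({0..<length w} - set e)"
    using c distinct_card[of ?c] unfolding is_embedding_def by simp
  also have "\<dots> = length w - card (set e)"
    using is_embedding_set_subset[OF e] by (simp add: card_Diff_subset)
  also have "\<dots> = length w - length u"
    using e distinct_card[OF is_embedding_distinct[OF e]] unfolding is_embedding_def by simp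
  finally have len_v: "length ?v = length w - length u" .
  then have "length w = length u + length ?v"
    using is_embedding_length_le[OF e] by simp
  moreover have "set e \<inter> set ?c = {}" "set e \<union> set ?c = {0..<length w}"
    using is_embedding_set_subset[OF e] by auto
  ultimately show ?thesis
    unfolding Compl_def in_shuffle_def using e c len_v by blast
qed

lemma finite_Compl: "finite (Compl w u)"
proof (rule finite_subset)
  show "Compl w u \<subseteq> {v. set v \<subseteq> set w \<and> length v = length w - length u}"
    unfolding Compl_def in_shuffle_def using is_embedding_set_subset_set by blast
  show "finite {v. set v \<subseteq> set w \<and> length v = length w - length u}"
    by (rule finite_lists_length_eq) simp
qed

lemma nths_compl_update_neq:
  assumes "square_free w" and f: "is_embedding w u f" and i: "i < length u"
    and "a < f ! i" and below: "\<And>k. k < i \<Longrightarrow> f ! k < a"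
  shows "nths w (- set f) \<noteq> nths w (- set (f[i := a]))"
proof (rule nths_compl_neq)
  let ?R = "{f ! k | k. k < length f \<and> k \<noteq> i}"
  have len: "length f = length u" and fw: "f ! i < length w"
    using f i unfolding is_embedding_def by auto
  have "f ! i < f ! k" if "i < k" "k < length f" for k
    using f that unfolding is_embedding_def sorted_wrt_iff_nth_less by blast
  then have outside: "x < a \<or> f ! i < x" if "x \<in> ?R" for x
    using that below by (auto simp: neq_iff)
  have "set f = insert (f ! i) ?R"
    using i len by (auto simp: in_set_conv_nth)
  moreover have "set (f[i := a]) = insert a ?R"
    using i len by (auto simp: in_set_conv_nth nth_list_update) blast
  ultimately show "a \<notin> set f" "a \<in> set (f[i := a])" "Suc a \<notin> set (f[i := a])"
    and "\<And>j. j < a \<Longrightarrow> j \<in> set f \<longleftrightarrow> j \<in> set (f[i := a])"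
    using outside \<open>a < f ! i\<close> by (fastforce+)
  show "Suc a < length w" using \<open>a < f ! i\<close> fw by simp
  with \<open>square_free w\<close> show "w ! a \<noteq> w ! Suc a" by (rule square_free_nth_neq_nth_Suc)
qed

lemma card_Compl_gt_1_if_first_difference_lt:
  assumes "square_free w" and e: "is_embedding w u e" and f: "is_embedding w u f"
    and i: "i < length u" "e ! i < f ! i" and agree: "\<And>j. j < i \<Longrightarrow> e ! j = f ! j"
  shows "card (Compl w u) > 1"
proof -
  have below: "f ! k < e ! i" if "k < i" for k
    using e i that agree unfolding is_embedding_def sorted_wrt_iff_nth_less by force
  have "is_embedding w u (f[i := e ! i])"
  proof (rule is_embedding_update[OF f i(1)])
    show "e ! i < length w" "w ! (e ! i) = u ! i"
      using e i unfolding is_embedding_def by auto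
    show "e ! i < f ! k" if "i < k" "k < length u" for k
      using f i that unfolding is_embedding_def sorted_wrt_iff_nth_less by force
  qed (rule below)
  then have "nths w (- set f) \<in> Compl w u" "nths w (- set (f[i := e ! i])) \<in> Compl w u"
    and "nths w (- set f) \<noteq> nths w (- set (f[i := e ! i]))"
    using nths_compl_in_Compl[OF f] nths_compl_in_Compl nths_compl_update_neq[OF assms(1) f i below]
    by auto
  then show ?thesis
    using finite_Compl card_le_Suc0_iff_eq[of "Compl w u"] by (metis One_nat_def not_le)
qed

theorem lemma29:
  fixes w u :: "'a list"
  assumes "square_free w"
    and "scattered_factor u w"
    and "card (Emb w u) \<ge> 2"
  shows "card (Compl w u) > 1"
proof -
  have "finite (Emb w u)" using assms(3) card.infinite by fastforce
  then obtain e f where e: "is_embedding w u e" and f: "is_embedding w u f" and "e \<noteq> f"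
    using assms(3) card_le_Suc0_iff_eq[of "Emb w u"] unfolding Emb_def by auto
  moreover have "length e = length f" using e f unfolding is_embedding_def by simp
  ultimately obtain i where "i < length u" "e ! i \<noteq> f ! i" "\<And>j. j < i \<Longrightarrow> e ! j = f ! j"
    using e unfolding is_embedding_def by (metis first_difference)
  then show ?thesis
    using card_Compl_gt_1_if_first_difference_lt[OF assms(1) e f]
      card_Compl_gt_1_if_first_difference_lt[OF assms(1) f e] by (metis neq_iff)
qed

end
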